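(* Let $N\ge 1$ be an integer and $\lambda>0$, $\beta>0$, $\alpha>1$ real. For each positive divisor $m$ of $N$ put $c=N/m$, $$\mathbb{E}[T_{\text{job}}(m)]=\frac{\beta m\alpha}{m\alpha-1},\qquad a(m)=\lambda\,\mathbb{E}[T_{\text{job}}(m)],\qquad P_b(m)=\frac{a(m)^{N/m}/(N/m)!}{\sum_{j=0}^{N/m}a(m)^{j}/j!}.$$ (i) If $\alpha\ge 1.5$, then $P_b(m)$ is increasing in $m$ over the positive divisors $m$ of $N$, and hence attains its minimum at $m=1$ (i.e. $c=N$). (ii) If $\alpha<1.5$ and $N$ is even, then the minimum of $P_b(m)$ over the positive divisors $m$ of $N$ equals $\min\{P_b(1),P_b(2)\}$.
   Context: Model: an edge system has $N$ workers split into $c=N/m$ groups of $m$ workers (replication factor $m$, assumed to divide $N$). Jobs arrive as a Poisson process of rate $\lambda$; each job is replicated to the $m$ workers of a free group, and a job finding all groups busy is blocked. Each worker's service time is Pareto $\mathrm{Pareto}(\beta,\alpha)$ (scale $\beta$, tail index $\alpha>1$, i.e. $\Pr(X>x)=(\beta/x)^\alpha$ for $x\ge\beta$); the job-computing time (minimum of $m$ i.i.d. copies) is $\mathrm{Pareto}(\beta,m\alpha)$ with mean $\frac{\beta m\alpha}{m\alpha-1}$. The system is an M/G/c/c loss queue, so the job-blocking probability is the Erlang B formula $P_b(m)$ above. *)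

theory Defs
  imports Complex_Main
begin

text \<open>Mean job-computing time with replication factor m (Pareto(beta, m alpha) mean).\<close>
definition ET_job :: "real \<Rightarrow> real \<Rightarrow> nat \<Rightarrow> real" where
  "ET_job \<beta> \<alpha> m = \<beta> * real m * \<alpha> / (real m * \<alpha> - 1)"

definition load :: "real \<Rightarrow> real \<Rightarrow> real \<Rightarrow> nat \<Rightarrow> real" where
  "load lam \<beta> \<alpha> m = lam * ET_job \<beta> \<alpha> m"

definition erlangB :: "nat \<Rightarrow> real \<Rightarrow> real" where
  "erlangB c a = (a ^ c / fact c) / (\<Sum>j\<le>c. a ^ j / fact j)"

definition Pb :: "nat \<Rightarrow> real \<Rightarrow> real \<Rightarrow> real \<Rightarrow> nat \<Rightarrow> real" where
  "Pb N lam \<beta> \<alpha> m = erlangB (N div m) (load lam \<beta> \<alpha> m)"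

end

theory Submission
  imports Defs
begin

text \<open>
  The reciprocal of the Erlang B formula is the polynomial
  \<open>1/B(c,a) = (\<Sum>i\<le>c. \<Prod>t<i. (c - t)/a)\<close> in \<open>1/a\<close>.  Each factor \<open>(c - t)/a\<close> grows when \<open>c\<close>
  grows and when the per-server load \<open>a/c\<close> shrinks, so blocking does not increase when
  servers are added without raising the per-server load.  With \<open>c = N/m\<close> groups the
  per-server load is \<open>\<lambda>\<beta>\<alpha>/N \<cdot> m\<^sup>2/(m\<alpha> - 1)\<close>, and \<open>m\<^sub>1\<^sup>2/(m\<^sub>1\<alpha> - 1) \<le> m\<^sub>2\<^sup>2/(m\<^sub>2\<alpha> - 1)\<close> for
  \<open>m\<^sub>1 < m\<^sub>2\<close> exactly when \<open>\<alpha>m\<^sub>1m\<^sub>2 \<ge> m\<^sub>1 + m\<^sub>2\<close>.  This holds whenever \<open>m\<^sub>1 \<ge> 2\<close>, and for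
  \<open>m\<^sub>1 = 1\<close> and all \<open>m\<^sub>2 > 1\<close> precisely when \<open>\<alpha> \<ge> 3/2\<close>; so \<open>P\<^sub>b\<close> increases from \<open>m = 2\<close> on, and from \<open>m = 1\<close>
  on if \<open>\<alpha> \<ge> 3/2\<close>.
\<close>

definition inv_erlangB :: "nat \<Rightarrow> real \<Rightarrow> real" where
  "inv_erlangB c a = (\<Sum>i\<le>c. \<Prod>t<i. (real c - real t) / a)"

lemma inv_erlangB_Suc: "inv_erlangB (Suc c) a = 1 + real (Suc c) / a * inv_erlangB c a"
proof -
  have "inv_erlangB (Suc c) a = 1 + (\<Sum>i\<le>c. \<Prod>t<Suc i. (real (Suc c) - real t) / a)"
    unfolding inv_erlangB_def by (subst sum.atMost_Suc_shift) simp
  also have "(\<Sum>i\<le>c. \<Prod>t<Suc i. (real (Suc c) - real t) / a)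
      = (\<Sum>i\<le>c. real (Suc c) / a * (\<Prod>t<i. (real c - real t) / a))"
    by (intro sum.cong refl, subst prod.lessThan_Suc_shift) simp
  finally show ?thesis by (simp add: inv_erlangB_def sum_distrib_left)
qed

lemma sum_exp_terms_eq_inv_erlangB:
  assumes "a \<noteq> 0"
  shows "(\<Sum>j\<le>c. a ^ j / fact j) = a ^ c / fact c * inv_erlangB c a"
proof (induction c)
  case 0
  then show ?case by (simp add: inv_erlangB_def)
next
  case (Suc c)
  have "a ^ Suc c / fact (Suc c) * (real (Suc c) / a) = a ^ c / fact c"
    using assms by (simp add: field_simps del: of_nat_Suc)
  moreover have "a ^ Suc c / fact (Suc c) * inv_erlangB (Suc c) a
      = a ^ Suc c / fact (Suc c) + a ^ Suc c / fact (Suc c) * (real (Suc c) / a) * inv_erlangB c a"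
    by (simp only: inv_erlangB_Suc distrib_left mult_1_right mult.assoc)
  ultimately have "a ^ Suc c / fact (Suc c) * inv_erlangB (Suc c) a
      = a ^ Suc c / fact (Suc c) + a ^ c / fact c * inv_erlangB c a"
    by simp
  with Suc.IH show ?case by simp
qed

lemma erlangB_eq_inverse:
  assumes "a \<noteq> 0"
  shows "erlangB c a = 1 / inv_erlangB c a"
  using assms by (simp add: erlangB_def sum_exp_terms_eq_inv_erlangB)

lemma inv_erlangB_ge_1:
  assumes "a > 0"
  shows "1 \<le> inv_erlangB c a"
proof -
  have "inv_erlangB c a = 1 + (\<Sum>i\<in>{..c}-{0}. \<Prod>t<i. (real c - real t) / a)"
    unfolding inv_erlangB_def by (subst sum.remove[of _ 0]) auto
  also have "\<dots> \<ge> 1"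
    using assms by (auto intro!: sum_nonneg prod_nonneg)
  finally show ?thesis .
qed

lemma inv_erlangB_factor_mono:
  assumes "a\<^sub>1 > 0" "a\<^sub>2 > 0" "c\<^sub>2 \<le> c\<^sub>1" "real c\<^sub>2 * a\<^sub>1 \<le> real c\<^sub>1 * a\<^sub>2" "t < c\<^sub>2"
  shows "(real c\<^sub>2 - real t) / a\<^sub>2 \<le> (real c\<^sub>1 - real t) / a\<^sub>1"
proof -
  have "(real c\<^sub>2 - real t) * a\<^sub>1 = real c\<^sub>2 * a\<^sub>1 * (1 - real t / real c\<^sub>2)"
    using assms by (simp add: field_simps)
  also have "\<dots> \<le> real c\<^sub>1 * a\<^sub>2 * (1 - real t / real c\<^sub>2)"
    using assms by (intro mult_right_mono) auto
  also have "\<dots> \<le> real c\<^sub>1 * a\<^sub>2 * (1 - real t / real c\<^sub>1)"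
    using assms by (intro mult_left_mono diff_left_mono divide_left_mono) auto
  also have "\<dots> = (real c\<^sub>1 - real t) * a\<^sub>2"
    using assms by (simp add: field_simps)
  finally show ?thesis
    using assms by (simp add: field_simps)
qed

lemma inv_erlangB_mono:
  assumes "a\<^sub>1 > 0" "a\<^sub>2 > 0" "c\<^sub>2 \<le> c\<^sub>1" "real c\<^sub>2 * a\<^sub>1 \<le> real c\<^sub>1 * a\<^sub>2"
  shows "inv_erlangB c\<^sub>2 a\<^sub>2 \<le> inv_erlangB c\<^sub>1 a\<^sub>1"
proof -
  have "inv_erlangB c\<^sub>2 a\<^sub>2 \<le> (\<Sum>i\<le>c\<^sub>2. \<Prod>t<i. (real c\<^sub>1 - real t) / a\<^sub>1)"
    unfolding inv_erlangB_def
    using assms inv_erlangB_factor_mono[OF assms]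
    by (intro sum_mono prod_mono) auto
  also have "\<dots> \<le> inv_erlangB c\<^sub>1 a\<^sub>1"
    unfolding inv_erlangB_def using assms by (intro sum_mono2) (auto intro!: prod_nonneg)
  finally show ?thesis .
qed

lemma erlangB_antimono:
  assumes "a\<^sub>1 > 0" "a\<^sub>2 > 0" "c\<^sub>2 \<le> c\<^sub>1" "real c\<^sub>2 * a\<^sub>1 \<le> real c\<^sub>1 * a\<^sub>2"
  shows "erlangB c\<^sub>1 a\<^sub>1 \<le> erlangB c\<^sub>2 a\<^sub>2"
  using assms inv_erlangB_mono[OF assms] inv_erlangB_ge_1[of a\<^sub>2 c\<^sub>2]
  by (simp add: erlangB_eq_inverse frac_le)

lemma square_div_mono:
  fixes x y \<alpha> :: real
  assumes "0 < x" "x \<le> y" "1 < x * \<alpha>" "x + y \<le> \<alpha> * x * y"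
  shows "x\<^sup>2 / (x * \<alpha> - 1) \<le> y\<^sup>2 / (y * \<alpha> - 1)"
proof -
  have "0 < \<alpha>"
    using assms zero_less_mult_pos[of x \<alpha>] by simp
  then have "1 < y * \<alpha>"
    using assms mult_right_mono[of x y \<alpha>] by linarith
  have "y\<^sup>2 * (x * \<alpha> - 1) - x\<^sup>2 * (y * \<alpha> - 1) = (y - x) * (\<alpha> * x * y - x - y)"
    by (simp add: algebra_simps power2_eq_square)
  also have "\<dots> \<ge> 0"
    using assms by simp
  finally have "x\<^sup>2 * (y * \<alpha> - 1) \<le> y\<^sup>2 * (x * \<alpha> - 1)"
    by simp
  with assms \<open>1 < y * \<alpha>\<close> show ?thesis
    by (simp add: field_simps)
qed

lemma sum_le_alpha_mult:
  fixes m\<^sub>1 m\<^sub>2 :: nat and \<alpha> :: real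
  assumes "1 \<le> m\<^sub>1" "m\<^sub>1 < m\<^sub>2" "1 < \<alpha>" "3/2 \<le> \<alpha> \<or> 2 \<le> m\<^sub>1"
  shows "real m\<^sub>1 + real m\<^sub>2 \<le> \<alpha> * real m\<^sub>1 * real m\<^sub>2"
proof (cases "2 \<le> m\<^sub>1")
  case True
  then have "1 * 1 \<le> (real m\<^sub>1 - 1) * (real m\<^sub>2 - 1)"
    using assms by (intro mult_mono) auto
  moreover have "real m\<^sub>1 * real m\<^sub>2 \<le> \<alpha> * real m\<^sub>1 * real m\<^sub>2"
    using assms by simp
  ultimately show ?thesis
    by (simp add: algebra_simps)
next
  case False
  then have "m\<^sub>1 = 1" "2 \<le> real m\<^sub>2"
    using assms by auto
  moreover have "3/2 * real m\<^sub>2 \<le> \<alpha> * real m\<^sub>2"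
    using assms False by (intro mult_right_mono) auto
  ultimately show ?thesis
    by (simp only: of_nat_1 mult_1_right)
qed

lemma one_less_of_nat_mult:
  assumes "1 < \<alpha>" "0 < m"
  shows "1 < real m * (\<alpha> :: real)"
  using assms less_1_mult'[of \<alpha> "real m"] by (simp add: mult.commute)

lemma load_pos:
  assumes "lam > 0" "\<beta> > 0" "\<alpha> > 1" "m > 0"
  shows "load lam \<beta> \<alpha> m > 0"
  using assms one_less_of_nat_mult[of \<alpha> m] by (simp add: load_def ET_job_def)

lemma load_per_server:
  assumes "0 < m" "m dvd N" "real m * \<alpha> \<noteq> 1"
  shows "load lam \<beta> \<alpha> m / real (N div m) = lam * \<beta> * \<alpha> / real N * ((real m)\<^sup>2 / (real m * \<alpha> - 1))"
  using assms by (auto simp: load_def ET_job_def real_of_nat_div field_simps power2_eq_square)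

lemma Pb_mono:
  assumes "lam > 0" "\<beta> > 0" "\<alpha> > 1"
    and "0 < m\<^sub>1" "m\<^sub>1 dvd N" "m\<^sub>2 dvd N" "m\<^sub>1 \<le> m\<^sub>2" "0 < N"
    and "3/2 \<le> \<alpha> \<or> 2 \<le> m\<^sub>1"
  shows "Pb N lam \<beta> \<alpha> m\<^sub>1 \<le> Pb N lam \<beta> \<alpha> m\<^sub>2"
proof (cases "m\<^sub>1 = m\<^sub>2")
  case False
  let ?a\<^sub>1 = "load lam \<beta> \<alpha> m\<^sub>1" and ?a\<^sub>2 = "load lam \<beta> \<alpha> m\<^sub>2"
  let ?c\<^sub>1 = "N div m\<^sub>1" and ?c\<^sub>2 = "N div m\<^sub>2"
  have m\<^sub>2: "0 < m\<^sub>2" "m\<^sub>1 < m\<^sub>2"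
    using assms False by auto
  have a: "0 < ?a\<^sub>1" "0 < ?a\<^sub>2"
    using assms m\<^sub>2 by (simp_all add: load_pos)
  have c: "0 < ?c\<^sub>1" "0 < ?c\<^sub>2"
    using assms m\<^sub>2 by (auto simp: div_greater_zero_iff dvd_imp_le)
  have m\<alpha>: "1 < real m\<^sub>1 * \<alpha>" "1 < real m\<^sub>2 * \<alpha>"
    using assms m\<^sub>2 by (simp_all add: one_less_of_nat_mult)
  have "?a\<^sub>1 / real ?c\<^sub>1 = lam * \<beta> * \<alpha> / real N * ((real m\<^sub>1)\<^sup>2 / (real m\<^sub>1 * \<alpha> - 1))"
    using assms m\<alpha> by (intro load_per_server) auto
  also have "\<dots> \<le> lam * \<beta> * \<alpha> / real N * ((real m\<^sub>2)\<^sup>2 / (real m\<^sub>2 * \<alpha> - 1))"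
    using assms m\<^sub>2 m\<alpha> sum_le_alpha_mult[of m\<^sub>1 m\<^sub>2 \<alpha>]
    by (intro mult_left_mono square_div_mono) auto
  also have "\<dots> = ?a\<^sub>2 / real ?c\<^sub>2"
    using assms m\<^sub>2 m\<alpha> by (intro load_per_server[symmetric]) auto
  finally have "?a\<^sub>1 / real ?c\<^sub>1 \<le> ?a\<^sub>2 / real ?c\<^sub>2" .
  then have "real ?c\<^sub>2 * ?a\<^sub>1 \<le> real ?c\<^sub>1 * ?a\<^sub>2"
    using c by (simp add: field_simps)
  then show ?thesis
    unfolding Pb_def using a assms by (intro erlangB_antimono) (simp_all add: div_le_mono2)
qed simp

lemma finite_Pb_divisors:
  assumes "0 < N"
  shows "finite (Pb N lam \<beta> \<alpha> ` {m. 0 < m \<and> m dvd N})"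
  using assms by (auto intro: finite_subset[OF _ finite_divisors_nat])

lemma Min_Pb_eq_Pb_1:
  assumes "lam > 0" "\<beta> > 0" "3/2 \<le> \<alpha>" "0 < N"
  shows "Min (Pb N lam \<beta> \<alpha> ` {m. 0 < m \<and> m dvd N}) = Pb N lam \<beta> \<alpha> 1"
  using assms by (intro Min_eqI finite_Pb_divisors) (auto intro: Pb_mono)

lemma Min_Pb_eq_min_Pb_1_Pb_2:
  assumes "lam > 0" "\<beta> > 0" "\<alpha> > 1" "even N" "0 < N"
  shows "Min (Pb N lam \<beta> \<alpha> ` {m. 0 < m \<and> m dvd N}) = min (Pb N lam \<beta> \<alpha> 1) (Pb N lam \<beta> \<alpha> 2)"
proof (rule Min_eqI)
  show "finite (Pb N lam \<beta> \<alpha> ` {m. 0 < m \<and> m dvd N})"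
    using \<open>0 < N\<close> by (rule finite_Pb_divisors)
  show "min (Pb N lam \<beta> \<alpha> 1) (Pb N lam \<beta> \<alpha> 2) \<in> Pb N lam \<beta> \<alpha> ` {m. 0 < m \<and> m dvd N}"
    using assms by (auto simp: min_def)
next
  fix y
  assume "y \<in> Pb N lam \<beta> \<alpha> ` {m. 0 < m \<and> m dvd N}"
  then obtain m where m: "0 < m" "m dvd N" "y = Pb N lam \<beta> \<alpha> m"
    by auto
  show "min (Pb N lam \<beta> \<alpha> 1) (Pb N lam \<beta> \<alpha> 2) \<le> y"
  proof (cases "m = 1")
    case False
    then have "Pb N lam \<beta> \<alpha> 2 \<le> Pb N lam \<beta> \<alpha> m"
      using assms m by (intro Pb_mono) auto
    then show ?thesis
      using m by simp
  qed (use m in simp)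
qed

theorem lemma1:
  fixes N :: nat and lam \<beta> \<alpha> :: real
  assumes "N \<ge> 1" and "lam > 0" and "\<beta> > 0" and "\<alpha> > 1"
  shows "(\<alpha> \<ge> 3/2 \<longrightarrow>
            (\<forall>m1 m2. 0 < m1 \<and> m1 dvd N \<and> 0 < m2 \<and> m2 dvd N \<and> m1 \<le> m2 \<longrightarrow>
                Pb N lam \<beta> \<alpha> m1 \<le> Pb N lam \<beta> \<alpha> m2)
            \<and> Pb N lam \<beta> \<alpha> 1 = Min (Pb N lam \<beta> \<alpha> ` {m. 0 < m \<and> m dvd N}))
       \<and> (\<alpha> < 3/2 \<and> even N \<longrightarrow>
            Min (Pb N lam \<beta> \<alpha> ` {m. 0 < m \<and> m dvd N}) = min (Pb N lam \<beta> \<alpha> 1) (Pb N lam \<beta> \<alpha> 2))"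
proof -
  have "0 < N"
    using assms by simp
  with assms show ?thesis
    by (simp add: Pb_mono Min_Pb_eq_Pb_1 Min_Pb_eq_min_Pb_1_Pb_2)
qed

end
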